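(* Let $K\ge2$, $\varepsilon>0$ and $\gamma\in\mathcal{P}^\varepsilon(K)$. The function $$V_\gamma(F)=\log\Big(\sum_{k=1}^K\gamma_ke^{F_k}\Big)-\sum_{k=1}^K\gamma_kF_k,\qquad F\in\mathbb{R}^K,$$ is a candidate Lyapunov function for the equilibrium $F^*=0$ (modulo constants): $V_\gamma(F)\ge0$ with equality if and only if $\|F\|_{\mathbb L}=0$, and there exist $\alpha_1,\alpha_2\in\mathcal K_\infty$ such that $\alpha_1(\|F\|_{\mathbb L})\le V_\gamma(F)\le\alpha_2(\|F\|_{\mathbb L})$ for all $F\in\mathbb{R}^K$.
   Context: $\mathcal{P}^\varepsilon(K)$ is the set of probability vectors on $\{1,\dots,K\}$ with entries $\ge\varepsilon$. $\|F\|_{\mathbb L}=\inf_{\alpha\in\mathbb{R}}\|F-\alpha\mathbf 1\|$ (Euclidean norm, $\mathbf 1=(1,\dots,1)$), so $\|F\|_{\mathbb L}=0$ iff all $F_k$ are equal. A function $\alpha:\mathbb{R}_{\ge0}\to\mathbb{R}_{\ge0}$ is of class $\mathcal K_\infty$ if it is continuous, $\alpha(0)=0$, strictly increasing and unbounded. *)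

theory Defs
  imports "HOL-Analysis.Analysis"
begin

definition prob_eps :: "real \<Rightarrow> (real ^ 'n::finite) set" where
  "prob_eps eps = {g. (\<forall>k. g $ k \<ge> eps) \<and> (\<Sum>k\<in>UNIV. g $ k) = 1}"

definition normL :: "real ^ 'n::finite \<Rightarrow> real" where
  "normL F = (INF a\<in>(UNIV::real set). norm (F - (\<chi> k. a)))"

definition Kinf :: "(real \<Rightarrow> real) \<Rightarrow> bool" where
  "Kinf al \<longleftrightarrow> (\<forall>x\<ge>0. al x \<ge> 0) \<and> continuous_on {0..} al \<and> al 0 = 0
     \<and> strict_mono_on {0..} al \<and> (\<forall>M. \<exists>x\<ge>0. al x > M)"

definition Vgam :: "real ^ 'n::finite \<Rightarrow> real ^ 'n \<Rightarrow> real" where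
  "Vgam g F = ln (\<Sum>k\<in>UNIV. g $ k * exp (F $ k)) - (\<Sum>k\<in>UNIV. g $ k * F $ k)"

end

theory Submission
  imports Defs
begin

text \<open>
  With \<open>m = \<Sum>k. \<gamma>\<^sub>k F\<^sub>k\<close> and \<open>\<phi>(x) = e\<^sup>x - 1 - x \<ge> 0\<close>, one has
  \<open>V\<^sub>\<gamma>(F) = ln (1 + \<Sum>k. \<gamma>\<^sub>k \<phi>(F\<^sub>k - m))\<close>.
  Both \<open>V\<^sub>\<gamma>(F)\<close> and \<open>\<parallel>F\<parallel>\<^sub>L\<close> are comparable to the spread \<open>D = max F - min F\<close>:
  \<open>D/2 \<le> \<parallel>F\<parallel>\<^sub>L \<le> K D\<close> and \<open>V\<^sub>\<gamma>(F) \<le> D\<close>, while the maximal coordinate exceeds the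
  \<open>\<gamma>\<close>-mean \<open>m\<close> by at least \<open>\<epsilon> D\<close>, so that \<open>V\<^sub>\<gamma>(F) \<ge> ln (1 + \<epsilon> \<phi>(\<epsilon> D))\<close>.
  Hence \<open>\<alpha>\<^sub>1(r) = ln (1 + \<epsilon> \<phi>(\<epsilon> r / K))\<close> and \<open>\<alpha>\<^sub>2(r) = 2 r\<close> work.
\<close>

definition exp_gap :: "real \<Rightarrow> real" where
  "exp_gap x = exp x - 1 - x"

lemma exp_gap_nonneg: "0 \<le> exp_gap x"
  using exp_ge_add_one_self[of x] unfolding exp_gap_def by linarith

lemma exp_gap_strict_mono_on: "strict_mono_on {0..} exp_gap"
proof (rule strict_mono_onI)
  fix a b :: real assume "a \<in> {0..}" "a < b"
  then have "0 \<le> a" "0 < b - a" by auto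
  have "b - a < exp (b - a) - 1"
    using exp_lower_Taylor_quadratic[OF less_imp_le[OF \<open>0 < b - a\<close>]]
      zero_less_power[OF \<open>0 < b - a\<close>, of 2]
    by linarith
  also have "\<dots> \<le> exp a * (exp (b - a) - 1)"
    using mult_right_mono[of 1 "exp a" "exp (b - a) - 1"] \<open>0 \<le> a\<close> \<open>0 < b - a\<close> by simp
  also have "\<dots> = exp b - exp a"
    by (simp add: algebra_simps flip: exp_add)
  finally show "exp_gap a < exp_gap b" by (simp add: exp_gap_def)
qed

lemma exp_gap_mono: "0 \<le> a \<Longrightarrow> a \<le> b \<Longrightarrow> exp_gap a \<le> exp_gap b"
  using strict_mono_on_leD[OF exp_gap_strict_mono_on] by simp

lemma filterlim_exp_gap_at_top: "filterlim exp_gap at_top at_top"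
proof (rule filterlim_at_top_mono[OF filterlim_ident])
  show "\<forall>\<^sub>F y in at_top. y \<le> exp_gap y"
    using eventually_ge_at_top[of 2]
  proof eventually_elim
    case (elim y)
    then have "y \<le> y\<^sup>2 / 2"
      by (simp add: power2_eq_square)
    also have "\<dots> \<le> exp_gap y"
      using exp_lower_Taylor_quadratic[of y] elim unfolding exp_gap_def by simp
    finally show ?case .
  qed
qed

lemma KinfI:
  assumes "continuous_on {0..} f" "f 0 = 0" "strict_mono_on {0..} f"
    and "filterlim f at_top at_top"
  shows "Kinf f"
  unfolding Kinf_def
proof (intro conjI allI impI assms(1-3))
  show "0 \<le> f x" if "0 \<le> x" for x
    using strict_mono_on_leD[OF assms(3), of 0 x] that assms(2) by simp
  show "\<exists>x\<ge>0. M < f x" for M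
  proof -
    have "\<forall>\<^sub>F x in at_top. M < f x"
      using assms(4) by (simp add: filterlim_at_top_dense)
    then have "\<forall>\<^sub>F x in at_top. 0 \<le> x \<and> M < f x"
      using eventually_ge_at_top by (rule eventually_conj[rotated])
    then obtain N where "\<And>x. N \<le> x \<Longrightarrow> 0 \<le> x \<and> M < f x"
      by (auto simp: eventually_at_top_linorder)
    then show ?thesis
      using order_refl by blast
  qed
qed

lemma Kinf_pos: "Kinf a \<Longrightarrow> 0 < x \<Longrightarrow> 0 < a x"
  unfolding Kinf_def by (metis atLeast_iff less_imp_le order_refl strict_mono_onD)

lemma Kinf_scale: "0 < c \<Longrightarrow> Kinf (\<lambda>x. c * x)"
  by (rule KinfI)
    (auto intro!: continuous_intros strict_mono_onI filterlim_tendsto_pos_mult_at_top filterlim_ident)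

lemma Kinf_ln_exp_gap:
  assumes "0 < e" "0 < c"
  shows "Kinf (\<lambda>x. ln (1 + e * exp_gap (c * x)))"
proof (rule KinfI)
  have pos: "0 < 1 + e * exp_gap y" for y
    using exp_gap_nonneg[of y] assms(1) by (simp add: add_pos_nonneg)
  show "continuous_on {0..} (\<lambda>x. ln (1 + e * exp_gap (c * x)))"
    using pos unfolding exp_gap_def by (intro continuous_intros) (metis less_irrefl)
  show "ln (1 + e * exp_gap (c * 0)) = 0"
    by (simp add: exp_gap_def)
  show "strict_mono_on {0..} (\<lambda>x. ln (1 + e * exp_gap (c * x)))"
    using assms pos strict_mono_onD[OF exp_gap_strict_mono_on]
    by (intro strict_mono_onI) simp
  have "filterlim (\<lambda>x. c * x) at_top at_top"
    using assms(2) by (intro filterlim_tendsto_pos_mult_at_top[OF tendsto_const] filterlim_ident)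
  then have "filterlim (\<lambda>x. exp_gap (c * x)) at_top at_top"
    by (rule filterlim_compose[OF filterlim_exp_gap_at_top])
  then have "filterlim (\<lambda>x. 1 + e * exp_gap (c * x)) at_top at_top"
    using assms(1) by (intro filterlim_tendsto_add_at_top[OF tendsto_const]
        filterlim_tendsto_pos_mult_at_top[OF tendsto_const])
  then show "filterlim (\<lambda>x. ln (1 + e * exp_gap (c * x))) at_top at_top"
    by (rule filterlim_compose[OF ln_at_top])
qed

lemma vec_extremal_indices:
  fixes F :: "real ^ 'n::finite"
  obtains i j where "\<And>k. F $ k \<le> F $ i" "\<And>k. F $ j \<le> F $ k"
proof -
  have fin: "finite (range (($) F))" and ne: "range (($) F) \<noteq> {}" by auto
  obtain i where i: "F $ i = Max (range (($) F))" using Max_in[OF fin ne] by (metis rangeE)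
  obtain j where j: "F $ j = Min (range (($) F))" using Min_in[OF fin ne] by (metis rangeE)
  show ?thesis
  proof (rule that)
    show "F $ k \<le> F $ i" "F $ j \<le> F $ k" for k
      using i j fin by auto
  qed
qed

lemma dist_component_le_twice_normL:
  fixes F :: "real ^ 'n::finite"
  shows "\<bar>F $ i - F $ j\<bar> \<le> 2 * normL F"
proof -
  have "\<bar>F $ i - F $ j\<bar> / 2 \<le> norm (F - (\<chi> k. a))" for a
  proof -
    have "\<bar>F $ i - a\<bar> \<le> norm (F - (\<chi> k. a))" "\<bar>F $ j - a\<bar> \<le> norm (F - (\<chi> k. a))"
      using component_le_norm_cart[of "F - (\<chi> k. a)"] by simp_all
    then have "\<bar>F $ i - F $ j\<bar> \<le> 2 * norm (F - (\<chi> k. a))"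
      by arith
    then show ?thesis by simp
  qed
  then have "\<bar>F $ i - F $ j\<bar> / 2 \<le> normL F"
    unfolding normL_def by (intro cINF_greatest) auto
  then show ?thesis by simp
qed

lemma normL_nonneg: "0 \<le> normL F"
  using dist_component_le_twice_normL[of F i i] by simp

lemma normL_le_card_mult_spread:
  fixes F :: "real ^ 'n::finite"
  assumes "\<And>k. F $ k \<le> F $ i" "\<And>k. F $ j \<le> F $ k"
  shows "normL F \<le> CARD('n) * (F $ i - F $ j)"
proof -
  have "normL F \<le> norm (F - (\<chi> k. F $ j))"
    unfolding normL_def by (rule cINF_lower) (auto intro: bdd_belowI[of _ 0])
  also have "\<dots> \<le> (\<Sum>k\<in>UNIV. \<bar>F $ k - F $ j\<bar>)"
    using norm_le_l1_cart[of "F - (\<chi> k. F $ j)"] by simp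
  also have "\<dots> \<le> CARD('n) * (F $ i - F $ j)"
    using sum_bounded_above[of UNIV "\<lambda>k. \<bar>F $ k - F $ j\<bar>" "F $ i - F $ j"] assms by simp
  finally show ?thesis .
qed

lemma prob_epsD:
  assumes "g \<in> prob_eps eps"
  shows "eps \<le> g $ k" "(\<Sum>k\<in>UNIV. g $ k) = 1"
  using assms unfolding prob_eps_def by auto

lemma weighted_sum_le:
  fixes g :: "real ^ 'n::finite"
  assumes "\<And>k. 0 \<le> g $ k" "(\<Sum>k\<in>UNIV. g $ k) = 1" "\<And>k. f k \<le> M"
  shows "(\<Sum>k\<in>UNIV. g $ k * f k) \<le> M"
proof -
  have "(\<Sum>k\<in>UNIV. g $ k * f k) \<le> (\<Sum>k\<in>UNIV. g $ k * M)"
    using assms by (intro sum_mono mult_left_mono) auto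
  also have "\<dots> = M"
    using assms(2) by (simp flip: sum_distrib_right)
  finally show ?thesis .
qed

lemma weighted_sum_ge:
  fixes g :: "real ^ 'n::finite"
  assumes "\<And>k. 0 \<le> g $ k" "(\<Sum>k\<in>UNIV. g $ k) = 1" "\<And>k. M \<le> f k"
  shows "M \<le> (\<Sum>k\<in>UNIV. g $ k * f k)"
  using weighted_sum_le[of g "\<lambda>k. - f k" "- M"] assms by (simp add: sum_negf)

lemma Vgam_eq_ln_exp_gap:
  fixes g F :: "real ^ 'n::finite"
  assumes "\<And>k. 0 \<le> g $ k" "(\<Sum>k\<in>UNIV. g $ k) = 1"
  defines "m \<equiv> \<Sum>k\<in>UNIV. g $ k * F $ k"
  shows "Vgam g F = ln (1 + (\<Sum>k\<in>UNIV. g $ k * exp_gap (F $ k - m)))"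
proof -
  let ?S = "\<Sum>k\<in>UNIV. g $ k * exp_gap (F $ k - m)"
  have "(\<Sum>k\<in>UNIV. g $ k * exp (F $ k - m))
      = (\<Sum>k\<in>UNIV. g $ k) + ((\<Sum>k\<in>UNIV. g $ k * F $ k) - (\<Sum>k\<in>UNIV. g $ k) * m) + ?S"
    by (simp add: exp_gap_def algebra_simps sum.distrib sum_subtractf sum_distrib_left sum_distrib_right)
  also have "\<dots> = 1 + ?S"
    using assms(2) by (simp add: m_def)
  finally have "(\<Sum>k\<in>UNIV. g $ k * exp (F $ k - m)) = 1 + ?S" .
  moreover have "(\<Sum>k\<in>UNIV. g $ k * exp (F $ k)) = exp m * (\<Sum>k\<in>UNIV. g $ k * exp (F $ k - m))"
    by (simp add: sum_distrib_left exp_diff)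
  moreover have "0 < 1 + ?S"
    using assms(1) exp_gap_nonneg by (intro add_pos_nonneg sum_nonneg mult_nonneg_nonneg) auto
  ultimately show ?thesis
    by (simp add: Vgam_def ln_mult m_def)
qed

lemma Vgam_le_spread:
  fixes g F :: "real ^ 'n::finite"
  assumes g: "\<And>k. 0 \<le> g $ k" "(\<Sum>k\<in>UNIV. g $ k) = 1"
    and ij: "\<And>k. F $ k \<le> F $ i" "\<And>k. F $ j \<le> F $ k"
  shows "Vgam g F \<le> F $ i - F $ j"
proof -
  let ?S = "\<Sum>k\<in>UNIV. g $ k * exp (F $ k)"
  have "exp (F $ j) \<le> ?S" "?S \<le> exp (F $ i)"
    using ij by (intro weighted_sum_ge weighted_sum_le g; simp)+
  then have "ln ?S \<le> F $ i"
    by (metis exp_gt_zero less_le_trans ln_exp ln_le_cancel_iff)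
  moreover have "F $ j \<le> (\<Sum>k\<in>UNIV. g $ k * F $ k)"
    using ij by (intro weighted_sum_ge g)
  ultimately show ?thesis
    unfolding Vgam_def by linarith
qed

lemma Vgam_ge_spread:
  fixes g F :: "real ^ 'n::finite"
  assumes g: "g \<in> prob_eps eps" and "0 \<le> eps"
    and ij: "\<And>k. F $ k \<le> F $ i" "\<And>k. F $ j \<le> F $ k"
  shows "ln (1 + eps * exp_gap (eps * (F $ i - F $ j))) \<le> Vgam g F"
proof -
  define m where "m = (\<Sum>k\<in>UNIV. g $ k * F $ k)"
  have g_ge: "eps \<le> g $ k" and g_nonneg: "0 \<le> g $ k" and g_sum: "(\<Sum>k\<in>UNIV. g $ k) = 1" for k
    using prob_epsD[OF g] \<open>0 \<le> eps\<close> order_trans by blast+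
  have D: "0 \<le> F $ i - F $ j"
    using ij(2) by simp
  have "eps * (F $ i - F $ j) \<le> g $ j * (F $ i - F $ j)"
    using g_ge D by (rule mult_right_mono)
  also have "\<dots> \<le> (\<Sum>k\<in>UNIV. g $ k * (F $ i - F $ k))"
    using g_nonneg ij by (intro member_le_sum mult_nonneg_nonneg) auto
  also have "\<dots> = F $ i - m"
    using g_sum by (simp add: m_def right_diff_distrib sum_subtractf flip: sum_distrib_right)
  finally have "eps * exp_gap (eps * (F $ i - F $ j)) \<le> g $ i * exp_gap (F $ i - m)"
    using g_ge g_nonneg exp_gap_nonneg \<open>0 \<le> eps\<close> D
    by (intro mult_mono exp_gap_mono) auto
  also have "\<dots> \<le> (\<Sum>k\<in>UNIV. g $ k * exp_gap (F $ k - m))"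
    using g_nonneg exp_gap_nonneg by (intro member_le_sum mult_nonneg_nonneg) auto
  finally have "ln (1 + eps * exp_gap (eps * (F $ i - F $ j)))
      \<le> ln (1 + (\<Sum>k\<in>UNIV. g $ k * exp_gap (F $ k - m)))"
    using exp_gap_nonneg \<open>0 \<le> eps\<close> by (intro ln_mono) (auto intro: add_pos_nonneg)
  then show ?thesis
    using Vgam_eq_ln_exp_gap[OF g_nonneg g_sum, of F] by (simp add: m_def)
qed

lemma Vgam_le_twice_normL:
  fixes g F :: "real ^ 'n::finite"
  assumes "\<And>k. 0 \<le> g $ k" "(\<Sum>k\<in>UNIV. g $ k) = 1"
  shows "Vgam g F \<le> 2 * normL F"
proof -
  obtain i j where ij: "\<And>k. F $ k \<le> F $ i" "\<And>k. F $ j \<le> F $ k"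
    using vec_extremal_indices[of F] by blast
  have "Vgam g F \<le> F $ i - F $ j"
    using assms ij by (rule Vgam_le_spread)
  also have "\<dots> \<le> 2 * normL F"
    using dist_component_le_twice_normL[of F i j] by simp
  finally show ?thesis .
qed

lemma Vgam_ge_normL:
  fixes g F :: "real ^ 'n::finite"
  assumes "g \<in> prob_eps eps" "0 < eps"
  shows "ln (1 + eps * exp_gap (eps / CARD('n) * normL F)) \<le> Vgam g F"
proof -
  obtain i j where ij: "\<And>k. F $ k \<le> F $ i" "\<And>k. F $ j \<le> F $ k"
    using vec_extremal_indices[of F] by blast
  have "eps / CARD('n) * normL F \<le> eps / CARD('n) * (CARD('n) * (F $ i - F $ j))"
    using normL_le_card_mult_spread[OF ij] assms(2) by (intro mult_left_mono) auto
  then have "exp_gap (eps / CARD('n) * normL F) \<le> exp_gap (eps * (F $ i - F $ j))"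
    using normL_nonneg[of F] assms(2) by (intro exp_gap_mono) auto
  then have "ln (1 + eps * exp_gap (eps / CARD('n) * normL F))
      \<le> ln (1 + eps * exp_gap (eps * (F $ i - F $ j)))"
    using exp_gap_nonneg assms(2) by (intro ln_mono) (auto intro: add_pos_nonneg)
  also have "\<dots> \<le> Vgam g F"
    using assms ij by (intro Vgam_ge_spread) auto
  finally show ?thesis .
qed

theorem lemma2:
  fixes g :: "real ^ 'n::finite" and eps :: real
  assumes "CARD('n) \<ge> 2" and "eps > 0" and "g \<in> prob_eps eps"
  shows "(\<forall>F. Vgam g F \<ge> 0) \<and> (\<forall>F. Vgam g F = 0 \<longleftrightarrow> normL F = 0)
    \<and> (\<exists>a1 a2. Kinf a1 \<and> Kinf a2 \<and>
         (\<forall>F. a1 (normL F) \<le> Vgam g F \<and> Vgam g F \<le> a2 (normL F)))"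
proof -
  define a1 where "a1 x = ln (1 + eps * exp_gap (eps / CARD('n) * x))" for x
  have a1: "Kinf a1"
    unfolding a1_def using assms(2) by (intro Kinf_ln_exp_gap) auto
  have a2: "Kinf (\<lambda>x. 2 * x)"
    by (rule Kinf_scale) simp
  have g: "0 \<le> g $ k" "(\<Sum>k\<in>UNIV. g $ k) = 1" for k
    using prob_epsD[OF assms(3)] assms(2) order_trans less_imp_le by blast+
  have bounds: "a1 (normL F) \<le> Vgam g F \<and> Vgam g F \<le> 2 * normL F" for F
    unfolding a1_def using Vgam_ge_normL[OF assms(3,2)] Vgam_le_twice_normL[OF g] by blast
  have nonneg: "0 \<le> Vgam g F" for F
    using bounds[of F] a1 normL_nonneg[of F] unfolding Kinf_def by force
  have "Vgam g F = 0 \<longleftrightarrow> normL F = 0" for F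
    using bounds[of F] nonneg[of F] normL_nonneg[of F] Kinf_pos[OF a1, of "normL F"] by force
  with nonneg bounds a1 a2 show ?thesis
    by blast
qed

end
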